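(* Let $\mathcal{G}=\langle G_1,\dots,G_L\rangle$ be a non-strict temporal graph with vertex set $V$, $|V|=n$, in which every layer consists of exactly two components and no two consecutive layers have the same partition. If there are $1+\log_2 n$ consecutive free transitions (i.e., the transitions from step $j$ to step $j+1$ are free for all $j\in\{t,t+1,\dots,t+m-1\}$ with $m\ge 1+\log_2 n$ and $t+m\le L$), then for every $s\in V$ there is a non-strict exploration schedule starting at $s$.
   Context: A non-strict temporal graph $\mathcal{G}=\langle G_1,\dots,G_L\rangle$ with vertex set $V$ is a sequence of partitions $G_t$ of $V$ into components. A non-strict temporal walk starting at $v$ at time $t_1$ is a sequence of components $C_{t_1},\dots,C_{t_l}$ with $t_{j+1}=t_j+1$, $C_{t_j}\in G_{t_j}$, $C_{t_j}\cap C_{t_{j+1}}\neq\emptyset$, $v\in C_{t_1}$, $t_l\le L$; it visits $\bigcup_j C_{t_j}$. A non-strict exploration schedule starting at $s$ is such a walk starting at $s$ at time $1$ that visits all of $V$. For $G_i=\{A_i,B_i\}$, $G_{i+1}=\{A_{i+1},B_{i+1}\}$, the transition from step $i$ to $i+1$ is free if $A_i\cap A_{i+1}$, $A_i\cap B_{i+1}$, $B_i\cap A_{i+1}$, $B_i\cap B_{i+1}$ are all non-empty. *)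

theory Defs
  imports Complex_Main
begin

text \<open>A non-strict temporal graph with vertex set V and lifetime L is modelled as a
function G from time steps to sets of components; only the layers G 1, ..., G L matter.\<close>

definition is_partition :: "'a set \<Rightarrow> 'a set set \<Rightarrow> bool" where
  "is_partition V P \<longleftrightarrow>
     (\<forall>C\<in>P. C \<noteq> {}) \<and> \<Union>P = V \<and> (\<forall>C\<in>P. \<forall>D\<in>P. C \<noteq> D \<longrightarrow> C \<inter> D = {})"

definition temporal_graph :: "'a set \<Rightarrow> nat \<Rightarrow> (nat \<Rightarrow> 'a set set) \<Rightarrow> bool" where
  "temporal_graph V L G \<longleftrightarrow> (\<forall>t\<in>{1..L}. is_partition V (G t))"

text \<open>A non-strict temporal walk starting at v at time t1 consisting of l components
C t1, C (t1+1), ..., C (t1+l-1) (indexed by absolute time).\<close>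

definition nonstrict_walk ::
  "nat \<Rightarrow> (nat \<Rightarrow> 'a set set) \<Rightarrow> 'a \<Rightarrow> nat \<Rightarrow> nat \<Rightarrow> (nat \<Rightarrow> 'a set) \<Rightarrow> bool" where
  "nonstrict_walk L G v t1 l C \<longleftrightarrow>
     1 \<le> t1 \<and> 1 \<le> l \<and> t1 + l - 1 \<le> L \<and>
     (\<forall>j<l. C (t1 + j) \<in> G (t1 + j)) \<and>
     (\<forall>j. Suc j < l \<longrightarrow> C (t1 + j) \<inter> C (t1 + Suc j) \<noteq> {}) \<and>
     v \<in> C t1"

definition walk_visits :: "nat \<Rightarrow> nat \<Rightarrow> (nat \<Rightarrow> 'a set) \<Rightarrow> 'a set" where
  "walk_visits t1 l C = (\<Union>j<l. C (t1 + j))"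

definition exploration_schedule ::
  "'a set \<Rightarrow> nat \<Rightarrow> (nat \<Rightarrow> 'a set set) \<Rightarrow> 'a \<Rightarrow> bool" where
  "exploration_schedule V L G s \<longleftrightarrow>
     (\<exists>l C. nonstrict_walk L G s 1 l C \<and> walk_visits 1 l C = V)"

definition free_transition :: "(nat \<Rightarrow> 'a set set) \<Rightarrow> nat \<Rightarrow> bool" where
  "free_transition G i \<longleftrightarrow>
     (\<exists>A B A' B'. G i = {A, B} \<and> G (Suc i) = {A', B'} \<and>
        A \<inter> A' \<noteq> {} \<and> A \<inter> B' \<noteq> {} \<and> B \<inter> A' \<noteq> {} \<and> B \<inter> B' \<noteq> {})"

end

theory Submission
  imports Defs
begin

text \<open>Walk greedily from s until the window of free transitions begins. Across a free
transition the current component meets both components of the next layer, so the walk may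
enter whichever of the two contains at least half of the still unvisited vertices. After m
free transitions fewer than n / 2^m < 1 vertices remain unvisited.\<close>

lemma temporal_graph_component:
  assumes "temporal_graph V L G" "i \<in> {1..L}" "D \<in> G i"
  shows "D \<subseteq> V" "D \<noteq> {}"
  using assms unfolding temporal_graph_def is_partition_def by auto

lemma temporal_graph_cover:
  assumes "temporal_graph V L G" "i \<in> {1..L}"
  shows "\<Union>(G i) = V"
  using assms unfolding temporal_graph_def is_partition_def by auto

lemma nonstrict_walk_last:
  assumes "nonstrict_walk L G v t1 l C"
  shows "C (t1 + l - 1) \<in> G (t1 + l - 1)"
proof -
  have comps: "\<forall>j<l. C (t1 + j) \<in> G (t1 + j)" and "1 \<le> l"
    using assms unfolding nonstrict_walk_def by auto
  then have "l - 1 < l" "t1 + (l - 1) = t1 + l - 1"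
    by simp_all
  then show ?thesis
    using comps by metis
qed

lemma nonstrict_walk_snoc:
  assumes walk: "nonstrict_walk L G v t1 l C"
    and D: "D \<in> G (t1 + l)" "C (t1 + l - 1) \<inter> D \<noteq> {}" "t1 + l \<le> L"
  shows "nonstrict_walk L G v t1 (Suc l) (C(t1 + l := D))"
  unfolding nonstrict_walk_def
proof (intro conjI allI impI)
  let ?C = "C(t1 + l := D)"
  show "1 \<le> t1" "1 \<le> Suc l" "t1 + Suc l - 1 \<le> L" "v \<in> ?C t1"
    using walk D(3) unfolding nonstrict_walk_def by auto
  show "?C (t1 + j) \<in> G (t1 + j)" if "j < Suc l" for j
    using walk D(1) that unfolding nonstrict_walk_def by (cases "j = l") auto
  show "?C (t1 + j) \<inter> ?C (t1 + Suc j) \<noteq> {}" if "Suc j < Suc l" for j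
  proof (cases "Suc j = l")
    case True
    then show ?thesis using D(2) by auto
  next
    case False
    then show ?thesis using walk that unfolding nonstrict_walk_def by auto
  qed
qed

lemma walk_visits_snoc:
  "walk_visits t1 (Suc l) (C(t1 + l := D)) = walk_visits t1 l C \<union> D"
  unfolding walk_visits_def lessThan_Suc by auto

lemma walk_visits_subset:
  assumes "temporal_graph V L G" "nonstrict_walk L G v t1 l C"
  shows "walk_visits t1 l C \<subseteq> V"
proof
  fix x assume "x \<in> walk_visits t1 l C"
  then obtain j where "j < l" "x \<in> C (t1 + j)"
    unfolding walk_visits_def by auto
  moreover from \<open>j < l\<close> have "t1 + j \<in> {1..L}" "C (t1 + j) \<in> G (t1 + j)"
    using assms(2) unfolding nonstrict_walk_def by auto
  ultimately show "x \<in> V"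
    using temporal_graph_component(1)[OF assms(1)] by blast
qed

lemma nonstrict_walk_exists:
  assumes graph: "temporal_graph V L G" and "v \<in> V" "1 \<le> t1" "1 \<le> l" "t1 + l - 1 \<le> L"
  shows "\<exists>C. nonstrict_walk L G v t1 l C"
  using assms(4,5)
proof (induction l rule: nat_induct_at_least)
  case base
  obtain D where "D \<in> G t1" "v \<in> D"
    using temporal_graph_cover[OF graph, of t1] \<open>v \<in> V\<close> \<open>1 \<le> t1\<close> base by auto
  then have "nonstrict_walk L G v t1 1 (\<lambda>_. D)"
    using \<open>1 \<le> t1\<close> base unfolding nonstrict_walk_def by auto
  then show ?case by blast
next
  case (Suc l)
  then have "t1 + l - 1 \<le> L" by simp
  then obtain C where walk: "nonstrict_walk L G v t1 l C" using Suc.IH by blast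
  have "t1 + l - 1 \<in> {1..L}" using Suc \<open>1 \<le> t1\<close> by auto
  then obtain x where x: "x \<in> C (t1 + l - 1)" "x \<in> V"
    using temporal_graph_component[OF graph _ nonstrict_walk_last[OF walk]] by blast
  have "t1 + l \<in> {1..L}" using Suc \<open>1 \<le> t1\<close> by auto
  then obtain D where "D \<in> G (t1 + l)" "x \<in> D"
    using temporal_graph_cover[OF graph] x(2) by blast
  then have "C (t1 + l - 1) \<inter> D \<noteq> {}" using x(1) by blast
  then show ?case
    using nonstrict_walk_snoc[OF walk \<open>D \<in> G (t1 + l)\<close>] Suc.prems by auto
qed

lemma free_transition_meets:
  assumes "free_transition G i" "C \<in> G i" "D \<in> G (Suc i)"
  shows "C \<inter> D \<noteq> {}"
proof -
  obtain A B A' B' where layers: "G i = {A, B}" "G (Suc i) = {A', B'}"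
    and meets: "A \<inter> A' \<noteq> {}" "A \<inter> B' \<noteq> {}" "B \<inter> A' \<noteq> {}" "B \<inter> B' \<noteq> {}"
    using assms(1) unfolding free_transition_def by (elim exE conjE) (rule that)
  have "C = A \<or> C = B" "D = A' \<or> D = B'"
    using assms(2,3) unfolding layers by simp_all
  then show ?thesis
    using meets by blast
qed

lemma two_cover_halves:
  fixes U A B :: "'a set"
  assumes "finite U" "U \<subseteq> A \<union> B"
  shows "\<exists>D\<in>{A, B}. 2 * card (U - D) \<le> card U"
proof -
  have "card (U - A) + card (U - B) = card ((U - A) \<union> (U - B))"
    using assms by (intro card_Un_disjoint[symmetric]) auto
  also have "\<dots> \<le> card U"
    using assms(1) by (intro card_mono) auto
  finally show ?thesis by auto
qed

lemma free_transition_halving_component: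
  assumes "temporal_graph V L G" "Suc i \<in> {1..L}" "free_transition G i"
    and "finite U" "U \<subseteq> V"
  shows "\<exists>D\<in>G (Suc i). 2 * card (U - D) \<le> card U"
proof -
  obtain A B where "G (Suc i) = {A, B}"
    using assms(3) unfolding free_transition_def by (elim exE conjE) (rule that)
  moreover have "U \<subseteq> A \<union> B"
    using temporal_graph_cover[OF assms(1,2)] assms(5) calculation by auto
  ultimately show ?thesis
    using two_cover_halves[OF assms(4)] by simp
qed

lemma free_window_walk:
  assumes graph: "temporal_graph V L G" and "finite V" "v \<in> V" "1 \<le> t" "t + k \<le> L"
    and "\<forall>j\<in>{t..<t+k}. free_transition G j"
  shows "\<exists>C. nonstrict_walk L G v 1 (t + k) C
           \<and> card (V - walk_visits 1 (t + k) C) * 2 ^ k \<le> card V"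
  using assms(5,6)
proof (induction k)
  case 0
  then obtain C where "nonstrict_walk L G v 1 t C"
    using nonstrict_walk_exists[OF graph \<open>v \<in> V\<close>, of 1 t] \<open>1 \<le> t\<close> by auto
  moreover have "card (V - walk_visits 1 t C) \<le> card V"
    using \<open>finite V\<close> by (simp add: card_mono)
  ultimately show ?case by auto
next
  case (Suc k)
  then obtain C where walk: "nonstrict_walk L G v 1 (t + k) C"
    and bound: "card (V - walk_visits 1 (t + k) C) * 2 ^ k \<le> card V"
    by auto
  define U where "U = V - walk_visits 1 (t + k) C"
  have free: "free_transition G (t + k)" and next_step: "Suc (t + k) \<in> {1..L}"
    using Suc.prems by auto
  obtain D where D: "D \<in> G (Suc (t + k))" "2 * card (U - D) \<le> card U"
    using free_transition_halving_component[OF graph next_step free, of U]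
      \<open>finite V\<close> U_def by auto
  define C' where "C' = C(Suc (t + k) := D)"
  have "C (t + k) \<inter> D \<noteq> {}"
    using free_transition_meets[OF free _ D(1)] nonstrict_walk_last[OF walk] by simp
  then have "nonstrict_walk L G v 1 (t + Suc k) C'"
    using nonstrict_walk_snoc[OF walk, of D] D(1) next_step C'_def by simp
  moreover have "V - walk_visits 1 (t + Suc k) C' = U - D"
    using walk_visits_snoc[of 1 "t + k" C D] U_def C'_def by auto
  moreover have "card (U - D) * 2 ^ Suc k \<le> card V"
  proof -
    have "card (U - D) * 2 ^ Suc k = 2 * card (U - D) * 2 ^ k" by simp
    also have "\<dots> \<le> card U * 2 ^ k" using D(2) by (rule mult_le_mono1)
    also have "\<dots> \<le> card V" using bound U_def by simp
    finally show ?thesis .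
  qed
  ultimately show ?case by auto
qed

lemma less_power2_of_log2_less:
  fixes n m :: nat
  assumes "0 < n" "log 2 (real n) < real m"
  shows "n < 2 ^ m"
proof -
  have "real n < 2 powr real m" using assms by (simp add: log_less_iff)
  then show ?thesis by (simp add: powr_realpow)
qed

theorem lemma5:
  fixes V :: "'a set" and G :: "nat \<Rightarrow> 'a set set" and L t m :: nat and s :: 'a
  assumes "finite V"
    and "temporal_graph V L G"
    and "\<forall>i\<in>{1..L}. card (G i) = 2"
    and "\<forall>i. 1 \<le> i \<and> i < L \<longrightarrow> G i \<noteq> G (Suc i)"
    and "1 \<le> t"
    and "real m \<ge> 1 + log 2 (real (card V))"
    and "t + m \<le> L"
    and "\<forall>j\<in>{t..<t+m}. free_transition G j"
    and "s \<in> V"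
  shows "exploration_schedule V L G s"
proof -
  obtain C where walk: "nonstrict_walk L G s 1 (t + m) C"
    and bound: "card (V - walk_visits 1 (t + m) C) * 2 ^ m \<le> card V"
    using free_window_walk[OF assms(2,1,9,5,7,8)] by blast
  have "0 < card V"
    using assms(1,9) card_gt_0_iff by blast
  moreover have "log 2 (real (card V)) < real m"
    using assms(6) by simp
  ultimately have "card V < 2 ^ m"
    by (rule less_power2_of_log2_less)
  then have "card (V - walk_visits 1 (t + m) C) = 0"
    using bound by (cases "card (V - walk_visits 1 (t + m) C)") auto
  then have "walk_visits 1 (t + m) C = V"
    using walk_visits_subset[OF assms(2) walk] assms(1) by auto
  then show ?thesis
    unfolding exploration_schedule_def using walk by blast
qed

end
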